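(* Let $z_1,\dots,z_n$ be a stream of elements sampled into a buffer $B$ of size $s$ using the RS-x algorithm (described below). Then at any time $t\ge s+2$, the $s$ elements of the buffer are independent, and each is a uniformly random sample (with replacement) from $\{z_1,\dots,z_{t-1}\}$; i.e. the buffer consists of $s$ i.i.d. samples from $\{z_1,\dots,z_{t-1}\}$.
   Context: RS-x update when the point $z_t$ arrives at step $t$: if $|B|<s$, add $z_t$ to $B$; else if $t=s+1$, replace $B$ by $s$ points sampled uniformly with replacement from $B\cup\{z_t\}$; else (for $t>s+1$) independently replace each of the $s$ buffer entries by $z_t$ with probability $1/t$. The buffer at time $t$ means the buffer after the updates with $z_1,\dots,z_{t-1}$ (before $z_t$ is processed); probabilities are over the randomness of the update rule, for a fixed stream. *)

theory Defs
  imports "HOL-Probability.Probability"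
begin

fun seq_pmf :: "'a pmf list \<Rightarrow> 'a list pmf" where
  "seq_pmf [] = return_pmf []"
| "seq_pmf (p # ps) = bind_pmf p (\<lambda>x. bind_pmf (seq_pmf ps) (\<lambda>xs. return_pmf (x # xs)))"

definition iid_pmf :: "nat \<Rightarrow> 'a pmf \<Rightarrow> 'a list pmf" where
  "iid_pmf k p = seq_pmf (replicate k p)"

definition rsx_step :: "nat \<Rightarrow> nat \<Rightarrow> 'a \<Rightarrow> 'a list \<Rightarrow> 'a list pmf" where
  "rsx_step s t zt B =
     (if length B < s then return_pmf (B @ [zt])
      else if t = s + 1 then
        iid_pmf s (map_pmf (\<lambda>i. (B @ [zt]) ! i) (pmf_of_set {..<length B + 1}))
      else seq_pmf (map (\<lambda>b. map_pmf (\<lambda>c. if c then zt else b) (bernoulli_pmf (1 / real t))) B))"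

text \<open>Distribution of the buffer at time t, i.e. after processing z 1, ..., z (t-1).\<close>
primrec rsx_buffer :: "nat \<Rightarrow> (nat \<Rightarrow> 'a) \<Rightarrow> nat \<Rightarrow> 'a list pmf" where
  "rsx_buffer s z 0 = return_pmf []"
| "rsx_buffer s z (Suc t) =
     (if t = 0 then return_pmf [] else bind_pmf (rsx_buffer s z t) (rsx_step s t (z t)))"

end

theory Submission imports Defs begin

text \<open>Once the buffer is full and t \<ge> s + 2, each entry is replaced independently of the
others, so an i.i.d. buffer stays i.i.d.; and replacing a uniform sample from t - 1 points by
the new point with probability 1/t yields a uniform sample from t points. The invariant is
started at t = s + 2 by the resampling step, which draws s i.i.d. uniform samples directly.\<close>

lemma length_of_set_iid_pmf:
  "xs \<in> set_pmf (iid_pmf k p) \<Longrightarrow> length xs = k"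
  unfolding iid_pmf_def by (induction k arbitrary: xs) auto

lemma bind_iid_pmf_seq_map:
  "bind_pmf (iid_pmf k p) (\<lambda>xs. seq_pmf (map f xs)) = iid_pmf k (bind_pmf p f)"
  unfolding iid_pmf_def
proof (induction k)
  case 0
  then show ?case by (simp add: bind_return_pmf)
next
  case (Suc k)
  have "seq_pmf (replicate (Suc k) (bind_pmf p f)) =
     bind_pmf p (\<lambda>x. bind_pmf (f x) (\<lambda>y. bind_pmf (seq_pmf (replicate k p))
       (\<lambda>xs. bind_pmf (seq_pmf (map f xs)) (\<lambda>ys. return_pmf (y # ys)))))"
    by (simp add: Suc.IH[symmetric] bind_assoc_pmf)
  also have "\<dots> = bind_pmf p (\<lambda>x. bind_pmf (seq_pmf (replicate k p))
       (\<lambda>xs. bind_pmf (f x) (\<lambda>y. bind_pmf (seq_pmf (map f xs)) (\<lambda>ys. return_pmf (y # ys)))))"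
    by (subst bind_commute_pmf) (rule refl)
  finally show ?case by (simp add: bind_assoc_pmf bind_return_pmf)
qed

lemma bind_pmf_of_set_replace_bernoulli:
  assumes "finite A" "A \<noteq> {}" "a \<notin> A"
  shows "bind_pmf (pmf_of_set A)
           (\<lambda>x. map_pmf (\<lambda>c. if c then a else x) (bernoulli_pmf (1 / real (card A + 1))))
         = pmf_of_set (insert a A)"
proof (rule pmf_eqI)
  fix y
  define q where "q = 1 / real (card A + 1)"
  have q: "0 \<le> q" "q \<le> 1" "1 - q = real (card A) / real (card A + 1)"
    unfolding q_def by (auto simp: field_simps)
  have "pmf (bind_pmf (pmf_of_set A) (\<lambda>x. map_pmf (\<lambda>c. if c then a else x) (bernoulli_pmf q))) y
      = (\<Sum>x\<in>A. indicator {y} a * q + indicator {y} x * (1 - q)) / real (card A)"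
    using assms q by (simp add: map_pmf_def pmf_bind integral_pmf_of_set pmf_return)
  also have "\<dots> = pmf (pmf_of_set (insert a A)) y"
  proof -
    consider "y = a" | "y \<in> A" | "y \<notin> insert a A" by blast
    then show ?thesis
    proof cases
      case 1
      with assms have "\<And>x. x \<in> A \<Longrightarrow> x = y \<longleftrightarrow> False" by blast
      with 1 show ?thesis using assms by (simp add: q_def indicator_def cong: sum.cong)
    next
      case 2
      then have "y \<noteq> a" using assms by auto
      with 2 have "(\<Sum>x\<in>A. indicator {y} a * q + indicator {y} x * (1 - q)) = 1 - q"
        using assms by (simp add: indicator_def sum.delta)
      with 2 \<open>y \<noteq> a\<close> show ?thesis using assms q by simp
    next
      case 3
      then have "(\<Sum>x\<in>A. indicator {y} a * q + indicator {y} x * (1 - q)) = 0"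
        by (intro sum.neutral) (auto simp: indicator_def)
      with 3 show ?thesis using assms by (simp add: indicator_def)
    qed
  qed
  finally show "pmf (bind_pmf (pmf_of_set A) (\<lambda>x. map_pmf (\<lambda>c. if c then a else x)
      (bernoulli_pmf (1 / real (card A + 1))))) y = pmf (pmf_of_set (insert a A)) y"
    by (simp add: q_def)
qed

lemma map_pmf_nth_map_upt:
  assumes "0 < m"
  shows "map_pmf (\<lambda>i. map z [a..<a + m] ! i) (pmf_of_set {..<m}) = map_pmf z (pmf_of_set {a..<a + m})"
proof -
  have "pmf_of_set {a..<a + m} = map_pmf (\<lambda>i. a + i) (pmf_of_set {..<m})"
    using assms by (subst map_pmf_of_set_inj) (auto simp: inj_on_def lessThan_atLeast0 add.commute)
  moreover have "map_pmf (\<lambda>i. map z [a..<a + m] ! i) (pmf_of_set {..<m})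
      = map_pmf (\<lambda>i. z (a + i)) (pmf_of_set {..<m})"
  proof (rule map_pmf_cong[OF refl])
    fix i assume "i \<in> set_pmf (pmf_of_set {..<m})"
    then have "i < m" using assms by (subst (asm) set_pmf_of_set) auto
    then show "map z [a..<a + m] ! i = z (a + i)" by simp
  qed
  ultimately show ?thesis
    by (simp add: pmf.map_comp o_def)
qed

lemma rsx_buffer_filling:
  "1 \<le> t \<Longrightarrow> t \<le> s + 1 \<Longrightarrow> rsx_buffer s z t = return_pmf (map z [1..<t])"
  by (induction t) (auto simp: bind_return_pmf rsx_step_def)

lemma rsx_buffer_full:
  "rsx_buffer s z (s + 2) = iid_pmf s (map_pmf z (pmf_of_set {1..<s + 2}))"
proof -
  have "rsx_buffer s z (s + 2) = rsx_step s (s + 1) (z (s + 1)) (map z [1..<s + 1])"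
    using rsx_buffer_filling[of "s + 1" s z] by (simp add: bind_return_pmf)
  also have "\<dots> = iid_pmf s (map_pmf (\<lambda>i. map z [1..<1 + (s + 1)] ! i) (pmf_of_set {..<s + 1}))"
  proof -
    have "map z [1..<s + 1] @ [z (s + 1)] = map z [1..<1 + (s + 1)]"
      by simp
    moreover have "rsx_step s (s + 1) (z (s + 1)) (map z [1..<s + 1])
        = iid_pmf s (map_pmf (\<lambda>i. (map z [1..<s + 1] @ [z (s + 1)]) ! i) (pmf_of_set {..<s + 1}))"
      by (simp add: rsx_step_def del: upt_Suc)
    ultimately show ?thesis
      by (simp only:)
  qed
  also have "\<dots> = iid_pmf s (map_pmf z (pmf_of_set {1..<s + 2}))"
    by (subst map_pmf_nth_map_upt) simp_all
  finally show ?thesis .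
qed

lemma rsx_buffer_Suc_iid:
  assumes "s + 2 \<le> t" and "rsx_buffer s z t = iid_pmf s (map_pmf z (pmf_of_set {1..<t}))"
  shows "rsx_buffer s z (Suc t) = iid_pmf s (map_pmf z (pmf_of_set {1..<Suc t}))"
proof -
  define replace where
    "replace = (\<lambda>b. map_pmf (\<lambda>c. if c then z t else b) (bernoulli_pmf (1 / real t)))"
  have "rsx_buffer s z (Suc t) = bind_pmf (iid_pmf s (map_pmf z (pmf_of_set {1..<t})))
      (\<lambda>B. seq_pmf (map replace B))"
    using assms by (auto intro!: bind_pmf_cong simp: rsx_step_def replace_def
                         dest: length_of_set_iid_pmf)
  also have "\<dots> = iid_pmf s (bind_pmf (map_pmf z (pmf_of_set {1..<t})) replace)"
    by (rule bind_iid_pmf_seq_map)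
  also have "bind_pmf (map_pmf z (pmf_of_set {1..<t})) replace
      = map_pmf z (bind_pmf (pmf_of_set {1..<t})
          (\<lambda>i. map_pmf (\<lambda>c. if c then t else i) (bernoulli_pmf (1 / real (card {1..<t} + 1)))))"
    using assms by (simp add: replace_def bind_map_pmf map_bind_pmf pmf.map_comp o_def if_distrib)
  also have "\<dots> = map_pmf z (pmf_of_set {1..<Suc t})"
    using assms by (subst bind_pmf_of_set_replace_bernoulli) (auto simp: atLeastLessThanSuc)
  finally show ?thesis .
qed

theorem theorem19:
  fixes s n t :: nat and z :: "nat \<Rightarrow> 'a"
  assumes "s + 2 \<le> t" and "t \<le> n"
  shows "rsx_buffer s z t = iid_pmf s (map_pmf z (pmf_of_set {1..<t}))"
  using assms(1)
proof (induction t rule: nat_induct_at_least)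
  case base
  show ?case by (rule rsx_buffer_full)
next
  case (Suc t)
  then show ?case by (rule rsx_buffer_Suc_iid)
qed

end
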